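(* Fix $p\in[2,\infty)$, assume (H1'), let $q=p/(p-1)$, and let $\beta:[0,1]\to[0,1]$ be smooth with $\beta=0$ outside $\omega$. Let $z$ be a strong solution with data $(z_0,z_1)\in Y_p$ and, for each $t\ge0$, let $v(t,\cdot)$ be the solution of $v_{xx}=\beta\,\operatorname{sgn}(z)|z|^{p-1}$ on $(0,1)$, $v(t,0)=v(t,1)=0$. Then there is a constant $K>0$ depending only on $p$ (and on $\beta$) such that for all $t\ge0$ and all $\sigma>0$, $\int_0^1|v|^q\,dx\le K E_p(t)$ and $\int_0^1|v_t|^q\,dx\le K\Big((p-2)\sigma E_p(t)+\sigma^{-(p-2)}\int_0^1\beta|z_t|^p\,dx\Big).$
   Context: (H1'): $a:[0,1]\to\mathbb{R}$ is continuous and nonnegative, and there exist $a_0>0$ and $c\in[0,1)$ such that $a\ge a_0$ on $\omega=[c,1]$. Damped wave equation: $z_{tt}-z_{xx}+a(x)z_t=0$ on $\mathbb{R}_+\times(0,1)$, $z(t,0)=z(t,1)=0$, $z(0)=z_0$, $z_t(0)=z_1$; $Y_p=(W^{2,p}(0,1)\cap W^{1,p}_0(0,1))\times W^{1,p}_0(0,1)$. $\rho=z_x+z_t$, $\xi=z_x-z_t$, $E_p(t)=\frac1p\int_0^1(|\rho|^p+|\xi|^p)\,dx$. *)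

theory Defs
  imports "HOL-Analysis.Analysis"
begin

text \<open>Functions on the space interval [0,1]. Integrals are Henstock-Kurzweil integrals over {0..1}.\<close>

definition in_Lp :: "real \<Rightarrow> (real \<Rightarrow> real) \<Rightarrow> bool" where
  "in_Lp p f \<longleftrightarrow> f measurable_on {0..1} \<and> (\<lambda>x. \<bar>f x\<bar> powr p) integrable_on {0..1}"

definition Lp_pow :: "real \<Rightarrow> (real \<Rightarrow> real) \<Rightarrow> real" where
  "Lp_pow p f = integral {0..1} (\<lambda>x. \<bar>f x\<bar> powr p)"

text \<open>f is in W^{1,p}(0,1) with (weak) derivative g: f in L^p, g in L^p and
  f is the (absolutely continuous) primitive of g.\<close>
definition has_weak_deriv_Lp :: "real \<Rightarrow> (real \<Rightarrow> real) \<Rightarrow> (real \<Rightarrow> real) \<Rightarrow> bool" where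
  "has_weak_deriv_Lp p f g \<longleftrightarrow> in_Lp p f \<and> in_Lp p g \<and>
     (\<forall>x\<in>{0..1}. f x = f 0 + integral {0..x} g)"

definition in_W2p_W10p :: "real \<Rightarrow> (real \<Rightarrow> real) \<Rightarrow> (real \<Rightarrow> real) \<Rightarrow> (real \<Rightarrow> real) \<Rightarrow> bool" where
  "in_W2p_W10p p f fx fxx \<longleftrightarrow> has_weak_deriv_Lp p f fx \<and> has_weak_deriv_Lp p fx fxx \<and> f 0 = 0 \<and> f 1 = 0"

definition in_W10p :: "real \<Rightarrow> (real \<Rightarrow> real) \<Rightarrow> (real \<Rightarrow> real) \<Rightarrow> bool" where
  "in_W10p p f fx \<longleftrightarrow> has_weak_deriv_Lp p f fx \<and> f 0 = 0 \<and> f 1 = 0"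

definition H1' :: "(real \<Rightarrow> real) \<Rightarrow> real \<Rightarrow> real \<Rightarrow> bool" where
  "H1' a a0 c \<longleftrightarrow> continuous_on {0..1} a \<and> (\<forall>x\<in>{0..1}. a x \<ge> 0) \<and>
     a0 > 0 \<and> 0 \<le> c \<and> c < 1 \<and> (\<forall>x\<in>{c..1}. a x \<ge> a0)"

text \<open>Strong solution of z_tt - z_xx + a z_t = 0, z(t,0)=z(t,1)=0, z(0)=z0, z_t(0)=z1,
  with data (z0,z1) in Y_p:
  z \<in> C([0,\<infinity>); W^{2,p} \<inter> W^{1,p}_0) \<inter> C^1([0,\<infinity>); W^{1,p}_0) \<inter> C^2([0,\<infinity>); L^p),
  the equation holding in L^p(0,1) for every t \<ge> 0.
  Here zx, zxx are the spatial derivatives of z, zt its time derivative, ztx the spatial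
  derivative of zt and ztt the time derivative of zt (all functions of (t,x)).\<close>
definition strong_solution ::
  "real \<Rightarrow> (real \<Rightarrow> real) \<Rightarrow> (real \<Rightarrow> real) \<Rightarrow> (real \<Rightarrow> real) \<Rightarrow>
   (real \<Rightarrow> real \<Rightarrow> real) \<Rightarrow> (real \<Rightarrow> real \<Rightarrow> real) \<Rightarrow> (real \<Rightarrow> real \<Rightarrow> real) \<Rightarrow>
   (real \<Rightarrow> real \<Rightarrow> real) \<Rightarrow> (real \<Rightarrow> real \<Rightarrow> real) \<Rightarrow> (real \<Rightarrow> real \<Rightarrow> real) \<Rightarrow> bool" where
  "strong_solution p a z0 z1 z zx zxx zt ztx ztt \<longleftrightarrow>
     (\<forall>t\<ge>0. in_W2p_W10p p (z t) (zx t) (zxx t) \<and> in_W10p p (zt t) (ztx t) \<and> in_Lp p (ztt t)) \<and>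
     (\<forall>t\<ge>0.
        \<comment> \<open>z is C^1 in time with values in W^{1,p}, derivative zt\<close>
        ((\<lambda>s. Lp_pow p (\<lambda>x. (z s x - z t x) / (s - t) - zt t x)) \<longlongrightarrow> 0) (at t within {0..}) \<and>
        ((\<lambda>s. Lp_pow p (\<lambda>x. (zx s x - zx t x) / (s - t) - ztx t x)) \<longlongrightarrow> 0) (at t within {0..}) \<and>
        \<comment> \<open>zt is differentiable in time with values in L^p, derivative ztt\<close>
        ((\<lambda>s. Lp_pow p (\<lambda>x. (zt s x - zt t x) / (s - t) - ztt t x)) \<longlongrightarrow> 0) (at t within {0..}) \<and>
        \<comment> \<open>continuity: z in W^{2,p}, zt in W^{1,p}, ztt in L^p\<close>
        ((\<lambda>s. Lp_pow p (\<lambda>x. zxx s x - zxx t x)) \<longlongrightarrow> 0) (at t within {0..}) \<and>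
        ((\<lambda>s. Lp_pow p (\<lambda>x. zt s x - zt t x)) \<longlongrightarrow> 0) (at t within {0..}) \<and>
        ((\<lambda>s. Lp_pow p (\<lambda>x. ztx s x - ztx t x)) \<longlongrightarrow> 0) (at t within {0..}) \<and>
        ((\<lambda>s. Lp_pow p (\<lambda>x. ztt s x - ztt t x)) \<longlongrightarrow> 0) (at t within {0..}) \<and>
        \<comment> \<open>the equation, in L^p(0,1)\<close>
        Lp_pow p (\<lambda>x. ztt t x - zxx t x + a x * zt t x) = 0) \<and>
     (\<forall>x\<in>{0..1}. z 0 x = z0 x \<and> zt 0 x = z1 x)"

definition in_Yp :: "real \<Rightarrow> (real \<Rightarrow> real) \<Rightarrow> (real \<Rightarrow> real) \<Rightarrow> bool" where
  "in_Yp p z0 z1 \<longleftrightarrow> (\<exists>d1 d2 e1. in_W2p_W10p p z0 d1 d2 \<and> in_W10p p z1 e1)"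

definition E_p :: "real \<Rightarrow> (real \<Rightarrow> real \<Rightarrow> real) \<Rightarrow> (real \<Rightarrow> real \<Rightarrow> real) \<Rightarrow> real \<Rightarrow> real" where
  "E_p p zx zt t = (1 / p) * integral {0..1}
     (\<lambda>x. \<bar>zx t x + zt t x\<bar> powr p + \<bar>zx t x - zt t x\<bar> powr p)"

definition smooth_on_01 :: "(real \<Rightarrow> real) \<Rightarrow> bool" where
  "smooth_on_01 f \<longleftrightarrow> (\<exists>D. D 0 = f \<and>
     (\<forall>n. \<forall>x\<in>{0..1}. (D n has_real_derivative D (Suc n) x) (at x within {0..1})))"

definition solves_dirichlet :: "(real \<Rightarrow> real) \<Rightarrow> (real \<Rightarrow> real) \<Rightarrow> bool" where
  "solves_dirichlet g w \<longleftrightarrow> continuous_on {0..1} w \<and> w 0 = 0 \<and> w 1 = 0 \<and>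
     (\<exists>w'. \<forall>x\<in>{0<..<1}. (w has_real_derivative w' x) (at x) \<and>
                           (w' has_real_derivative g x) (at x))"

end

theory Submission
  imports Defs
begin

(*
  Everything rests on the bound  |w(x)| <= int_0^1 |w''|  for solutions of w'' = g with
  w(0) = w(1) = 0 (Rolle gives a zero of w', and w(0) = 0).  Since z(t,0) = 0, the energy
  controls  sup |z(t)| <= ||z_x(t)||_p <= (p E_p(t))^(1/p),  which gives the bound on v.
  Differentiating the Dirichlet problem in t, v_t solves it with right-hand side
  beta (p-1) |z|^(p-2) z_t, so  sup |v_t| <= (p-1) sup|z|^(p-2) (int beta |z_t|^p)^(1/p)  by
  Hoelder, and Young's inequality with exponents (p-1)/(p-2) and p-1 splits the q-th power of
  this into the two terms of the estimate.  That v(.,x) is differentiable in t at all comes from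
  the W^(1,p) convergence of the difference quotients of z, which makes them, and hence those of
  sgn(z)|z|^(p-1), converge uniformly.
*)

section \<open>Functions in \<open>L\<^sup>p(0,1)\<close>\<close>

lemma in_Lp_iff_borel_measurable:
  "in_Lp p f \<longleftrightarrow> f \<in> borel_measurable (lebesgue_on {0..1}) \<and> (\<lambda>x. \<bar>f x\<bar> powr p) integrable_on {0..1}"
  unfolding in_Lp_def using measurable_on_iff_borel_measurable[of "{0..1::real}" f] by simp

lemma in_Lp_borel_measurable: "in_Lp p f \<Longrightarrow> f \<in> borel_measurable (lebesgue_on {0..1})"
  by (simp add: in_Lp_iff_borel_measurable)

lemma Lp_pow_nonneg: "Lp_pow p f \<ge> 0"
  unfolding Lp_pow_def
  by (cases "(\<lambda>x. \<bar>f x\<bar> powr p) integrable_on {0..1::real}")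
     (auto intro: integral_nonneg simp: not_integrable_integral)

lemma abs_le_one_plus_powr:
  fixes x :: real assumes "p \<ge> 1" shows "\<bar>x\<bar> \<le> 1 + \<bar>x\<bar> powr p"
proof (cases "\<bar>x\<bar> \<le> 1")
  case False
  then have "\<bar>x\<bar> powr 1 \<le> \<bar>x\<bar> powr p" using assms by (intro powr_mono) auto
  then show ?thesis using False by simp
qed (use powr_ge_zero[of "\<bar>x\<bar>" p] in linarith)

lemma in_Lp_integrable:
  assumes "in_Lp p f" "p \<ge> 1"
  shows "f integrable_on {0..1}" "(\<lambda>x. \<bar>f x\<bar>) integrable_on {0..1}"
proof -
  have f: "f \<in> borel_measurable (lebesgue_on {0..1})" using in_Lp_borel_measurable assms(1) .
  have bound: "(\<lambda>x. 1 + \<bar>f x\<bar> powr p) integrable_on {0..1::real}"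
    using assms unfolding in_Lp_def by (intro integrable_add) auto
  show "f integrable_on {0..1}" "(\<lambda>x. \<bar>f x\<bar>) integrable_on {0..1}"
    by (rule measurable_bounded_by_integrable_imp_integrable_real[OF _ bound];
        use f abs_le_one_plus_powr assms(2) in auto)+
qed

lemma powr_abs_add_le:
  fixes a b p :: real assumes "p \<ge> 0"
  shows "\<bar>a + b\<bar> powr p \<le> 2 powr p * (\<bar>a\<bar> powr p + \<bar>b\<bar> powr p)"
proof -
  define m where "m = max \<bar>a\<bar> \<bar>b\<bar>"
  have "\<bar>a + b\<bar> powr p \<le> (2 * m) powr p" using assms by (intro powr_mono2) (auto simp: m_def)
  also have "\<dots> = 2 powr p * m powr p" by (simp add: m_def powr_mult)
  also have "m powr p \<le> \<bar>a\<bar> powr p + \<bar>b\<bar> powr p" by (simp add: m_def max_def)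
  finally show ?thesis by simp
qed

lemma in_Lp_add:
  assumes f: "in_Lp p f" and g: "in_Lp p g" and p: "p \<ge> 0"
  shows "in_Lp p (\<lambda>x. f x + g x)"
  unfolding in_Lp_iff_borel_measurable
proof
  show fg: "(\<lambda>x. f x + g x) \<in> borel_measurable (lebesgue_on {0..1})"
    using f g by (intro borel_measurable_add in_Lp_borel_measurable)
  have "(\<lambda>x. 2 powr p * (\<bar>f x\<bar> powr p + \<bar>g x\<bar> powr p)) integrable_on {0..1}"
    using f g integrable_cmul[of "\<lambda>x. \<bar>f x\<bar> powr p + \<bar>g x\<bar> powr p" "{0..1}" "2 powr p"]
    unfolding in_Lp_def by (simp add: integrable_add)
  then show "(\<lambda>x. \<bar>f x + g x\<bar> powr p) integrable_on {0..1}"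
    by (rule measurable_bounded_by_integrable_imp_integrable_real[rotated])
       (use fg p powr_abs_add_le in \<open>auto intro: measurable_abs_powr\<close>)
qed

lemma in_Lp_cmult:
  assumes "in_Lp p f" shows "in_Lp p (\<lambda>x. c * f x)"
proof -
  have "(\<lambda>x. \<bar>c\<bar> powr p * \<bar>f x\<bar> powr p) integrable_on {0..1}"
    using assms integrable_cmul[of "\<lambda>x. \<bar>f x\<bar> powr p" "{0..1}" "\<bar>c\<bar> powr p"]
    unfolding in_Lp_def by simp
  then show ?thesis using borel_measurable_times[OF borel_measurable_const in_Lp_borel_measurable[OF assms]]
    by (simp add: in_Lp_iff_borel_measurable abs_mult powr_mult)
qed

lemma in_Lp_diff:
  assumes "in_Lp p f" "in_Lp p g" "p \<ge> 0" shows "in_Lp p (\<lambda>x. f x - g x)"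
  using in_Lp_add[OF assms(1) in_Lp_cmult[OF assms(2), of "-1"] assms(3)] by simp

lemma Lp_pow_le_integral_sum_diff:
  assumes f: "in_Lp p f" and g: "in_Lp p g" and p: "p \<ge> 0"
  shows "Lp_pow p f \<le> integral {0..1} (\<lambda>x. \<bar>f x + g x\<bar> powr p + \<bar>f x - g x\<bar> powr p)"
  unfolding Lp_pow_def
proof (rule integral_le)
  show "(\<lambda>x. \<bar>f x\<bar> powr p) integrable_on {0..1}" using f by (simp add: in_Lp_def)
  show "(\<lambda>x. \<bar>f x + g x\<bar> powr p + \<bar>f x - g x\<bar> powr p) integrable_on {0..1}"
    using in_Lp_add[OF f g p] in_Lp_diff[OF f g p] by (intro integrable_add) (auto simp: in_Lp_def)
next
  fix x :: real
  define m where "m = max \<bar>f x + g x\<bar> \<bar>f x - g x\<bar>"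
  have "\<bar>f x\<bar> powr p \<le> m powr p" using p by (intro powr_mono2) (auto simp: m_def)
  also have "\<dots> \<le> \<bar>f x + g x\<bar> powr p + \<bar>f x - g x\<bar> powr p" by (simp add: m_def max_def)
  finally show "\<bar>f x\<bar> powr p \<le> \<bar>f x + g x\<bar> powr p + \<bar>f x - g x\<bar> powr p" .
qed

lemma Youngs_inequality_scaled:
  fixes a r p :: real assumes "p > 1" "r > 0" "a \<ge> 0"
  shows "a \<le> r * (a powr p / (r powr p * p) + (p - 1) / p)"
proof -
  have "(a / r) * 1 \<le> (a / r) powr p / p + 1 powr (p / (p - 1)) / (p / (p - 1))"
    by (rule Youngs_inequality) (use assms in \<open>auto simp: field_simps\<close>)
  then have "a / r \<le> a powr p / (r powr p * p) + (p - 1) / p"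
    using assms by (simp add: powr_divide)
  then show ?thesis using assms by (simp add: field_simps)
qed

lemma L1_le_Lp:
  assumes f: "in_Lp p f" and p: "p \<ge> 1"
  shows "integral {0..1} (\<lambda>x. \<bar>f x\<bar>) \<le> Lp_pow p f powr (1 / p)"
proof (cases "p = 1")
  case True
  then show ?thesis using Lp_pow_nonneg[of p f] by (simp add: Lp_pow_def)
next
  case False
  then have p1: "p > 1" using p by simp
  define A where "A = Lp_pow p f"
  have fp: "(\<lambda>x. \<bar>f x\<bar> powr p) integrable_on {0..1}" using f by (simp add: in_Lp_def)
  \<comment> \<open>Integrate Young's inequality at an arbitrary scale \<open>r\<close>, then take \<open>r = A\<^sup>1\<^sup>/\<^sup>p\<close>
    (or let \<open>r \<rightarrow> 0\<close> when \<open>A = 0\<close>).\<close>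
  have scaled: "integral {0..1} (\<lambda>x. \<bar>f x\<bar>) \<le> r * (A / (r powr p * p) + (p - 1) / p)"
    if "r > 0" for r
  proof -
    have fp': "(\<lambda>x. \<bar>f x\<bar> powr p / (r powr p * p) + (p - 1) / p) integrable_on {0..1}"
      using fp by (intro integrable_add integrable_on_divide) auto
    have "integral {0..1} (\<lambda>x. \<bar>f x\<bar>)
        \<le> integral {0..1} (\<lambda>x. r * (\<bar>f x\<bar> powr p / (r powr p * p) + (p - 1) / p))"
      using in_Lp_integrable(2)[OF f p] integrable_cmul[OF fp', of r]
      by (intro integral_le) (auto intro: Youngs_inequality_scaled[OF p1 that])
    also have "\<dots> = r * (A / (r powr p * p) + (p - 1) / p)"
      using Henstock_Kurzweil_Integration.integral_add[OF integrable_on_divide[OF fp, of "r powr p * p"]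
          integrable_const_ivl[of "(p - 1) / p" 0 1]]
      by (simp add: A_def Lp_pow_def)
    finally show ?thesis .
  qed
  show ?thesis
  proof (cases "A = 0")
    case True
    have "integral {0..1} (\<lambda>x. \<bar>f x\<bar>) \<le> 0 + e" if "e > 0" for e
    proof -
      have "e * p / (p - 1) * (A / ((e * p / (p - 1)) powr p * p) + (p - 1) / p) = e"
        using True p1 by simp
      then show ?thesis using scaled[of "e * p / (p - 1)"] that p1 by simp
    qed
    then have "integral {0..1} (\<lambda>x. \<bar>f x\<bar>) \<le> 0" by (rule field_le_epsilon)
    then show ?thesis using True p1 unfolding A_def by simp
  next
    case False
    then have A: "A > 0" using Lp_pow_nonneg[of p f] unfolding A_def by linarith
    have "(A powr (1 / p)) powr p = A" using A p1 by (simp add: powr_powr)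
    then have "A powr (1 / p) * (A / ((A powr (1 / p)) powr p * p) + (p - 1) / p) = A powr (1 / p)"
      using A p1 by (simp add: divide_simps)
    then show ?thesis using scaled[of "A powr (1 / p)"] A by (simp add: A_def)
  qed
qed

lemma weighted_L1_le_Lp:
  assumes f: "in_Lp p f" and p: "p \<ge> 1"
    and w: "w \<in> borel_measurable (lebesgue_on {0..1})" and w01: "\<forall>x\<in>{0..1}. 0 \<le> w x \<and> w x \<le> 1"
  shows "integral {0..1} (\<lambda>x. w x * \<bar>f x\<bar>) \<le> integral {0..1} (\<lambda>x. w x * \<bar>f x\<bar> powr p) powr (1 / p)"
proof -
  \<comment> \<open>Apply the unweighted bound to \<open>w\<^sup>1\<^sup>/\<^sup>p f\<close>, which dominates \<open>w f\<close> since \<open>w \<le> 1\<close>.\<close>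
  define g where "g x = w x powr (1 / p) * f x" for x
  have f_meas: "f \<in> borel_measurable (lebesgue_on {0..1})" using f by (rule in_Lp_borel_measurable)
  have g_pow: "\<bar>g x\<bar> powr p = w x * \<bar>f x\<bar> powr p" if "x \<in> {0..1}" for x
    using w01 that p by (simp add: g_def abs_mult powr_mult powr_powr)
  have wf_le_g: "w x * \<bar>f x\<bar> \<le> \<bar>g x\<bar>" if "x \<in> {0..1}" for x
  proof -
    have "w x powr 1 \<le> w x powr (1 / p)" using w01 that p by (intro powr_mono') auto
    then have "w x \<le> w x powr (1 / p)" using w01 that by (cases "w x = 0") auto
    then show ?thesis by (simp add: g_def abs_mult mult_right_mono)
  qed
  have "(\<lambda>x. w x * \<bar>f x\<bar> powr p) integrable_on {0..1}"
  proof (rule measurable_bounded_by_integrable_imp_integrable_real)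
    show "(\<lambda>x. \<bar>f x\<bar> powr p) integrable_on {0..1}" using f by (simp add: in_Lp_def)
  qed (use w f_meas w01 in \<open>auto simp: abs_mult mult_left_le_one_le\<close>)
  moreover have "g \<in> borel_measurable (lebesgue_on {0..1})" unfolding g_def using w f_meas by measurable
  ultimately have g: "in_Lp p g"
    using g_pow integrable_cong[of "{0..1}" "\<lambda>x. \<bar>g x\<bar> powr p"]
    by (auto simp: in_Lp_iff_borel_measurable)
  have "integral {0..1} (\<lambda>x. w x * \<bar>f x\<bar>) \<le> integral {0..1} (\<lambda>x. \<bar>g x\<bar>)"
  proof (rule integral_le)
    show "(\<lambda>x. w x * \<bar>f x\<bar>) integrable_on {0..1}"
      by (rule measurable_bounded_by_integrable_imp_integrable_real[OF _ in_Lp_integrable(2)[OF g p]])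
         (use w f_meas w01 wf_le_g in \<open>auto simp: abs_mult\<close>)
  qed (use in_Lp_integrable(2)[OF g p] wf_le_g in auto)
  also have "\<dots> \<le> Lp_pow p g powr (1 / p)" by (rule L1_le_Lp[OF g p])
  also have "Lp_pow p g = integral {0..1} (\<lambda>x. w x * \<bar>f x\<bar> powr p)"
    unfolding Lp_pow_def by (rule integral_cong) (use g_pow in auto)
  finally show ?thesis .
qed

lemma integral_abs_powr_le_const:
  fixes f :: "real \<Rightarrow> real"
  assumes "continuous_on {0..1} f" "\<forall>x\<in>{0..1}. \<bar>f x\<bar> \<le> V" "q > 0"
  shows "integral {0..1} (\<lambda>x. \<bar>f x\<bar> powr q) \<le> V powr q"
proof -
  have "integral {0..1} (\<lambda>x. \<bar>f x\<bar> powr q) \<le> integral {0..1} (\<lambda>x::real. V powr q)"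
    using assms by (intro integral_le integrable_continuous_interval continuous_on_powr' continuous_intros)
      (auto intro: powr_mono2)
  then show ?thesis by simp
qed

section \<open>Primitives of \<open>L\<^sup>p\<close> functions\<close>

lemma weak_deriv_primitive:
  assumes "has_weak_deriv_Lp p f f'" "f 0 = 0" "x \<in> {0..1}"
  shows "f x = integral {0..x} f'"
proof -
  have "f x = f 0 + integral {0..x} f'" using assms(1,3) unfolding has_weak_deriv_Lp_def by blast
  then show ?thesis using assms(2) by simp
qed

lemma weak_deriv_continuous_on:
  assumes "has_weak_deriv_Lp p f f'" "p \<ge> 1"
  shows "continuous_on {0..1} f"
proof -
  have "continuous_on {0..1} (\<lambda>x. f 0 + integral {0..x} f')"
    using assms in_Lp_integrable(1)[of p f'] unfolding has_weak_deriv_Lp_def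
    by (intro continuous_intros indefinite_integral_continuous_1) auto
  then show ?thesis
    by (rule continuous_on_eq) (use assms(1) in \<open>unfold has_weak_deriv_Lp_def, metis\<close>)
qed

lemma abs_primitive_le_Lp:
  assumes g: "in_Lp p g" and p: "p \<ge> 1" and x: "x \<in> {0..1}"
  shows "\<bar>integral {0..x} g\<bar> \<le> Lp_pow p g powr (1 / p)"
proof -
  have sub: "{0..x} \<subseteq> {0..1}" using x by auto
  have "norm (integral {0..x} g) \<le> integral {0..x} (\<lambda>y. \<bar>g y\<bar>)"
    using integrable_on_subinterval[OF in_Lp_integrable(1)[OF g p] sub]
      integrable_on_subinterval[OF in_Lp_integrable(2)[OF g p] sub]
    by (rule integral_norm_bound_integral) auto
  then have "\<bar>integral {0..x} g\<bar> \<le> integral {0..x} (\<lambda>y. \<bar>g y\<bar>)" by simp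
  also have "\<dots> \<le> integral {0..1} (\<lambda>y. \<bar>g y\<bar>)"
    using integrable_on_subinterval[OF in_Lp_integrable(2)[OF g p] sub] in_Lp_integrable(2)[OF g p]
    by (intro integral_subset_le[OF sub]) auto
  also have "\<dots> \<le> Lp_pow p g powr (1 / p)" by (rule L1_le_Lp[OF g p])
  finally show ?thesis .
qed

lemma weak_deriv_abs_le:
  assumes f: "has_weak_deriv_Lp p f f'" "f 0 = 0" and p: "p \<ge> 1" and x: "x \<in> {0..1}"
  shows "\<bar>f x\<bar> \<le> Lp_pow p f' powr (1 / p)"
proof -
  have "in_Lp p f'" using f(1) unfolding has_weak_deriv_Lp_def by blast
  then show ?thesis using abs_primitive_le_Lp[OF _ p x] weak_deriv_primitive[OF f x] by simp
qed

lemma integral_weak_deriv_lincomb: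
  assumes f: "has_weak_deriv_Lp p f f'" "f 0 = 0" and g: "has_weak_deriv_Lp p g g'" "g 0 = 0"
    and h: "has_weak_deriv_Lp p h h'" "h 0 = 0" and p: "p \<ge> 1" and y: "y \<in> {0..1}"
  shows "integral {0..y} (\<lambda>x. c * (f' x - g' x) - h' x) = c * (f y - g y) - h y"
proof -
  have sub: "{0..y} \<subseteq> {0..1}" using y by auto
  have int: "u' integrable_on {0..y}" if "has_weak_deriv_Lp p u u'" for u u'
    using integrable_on_subinterval[OF in_Lp_integrable(1)[OF _ p] sub] that
    unfolding has_weak_deriv_Lp_def by blast
  have "integral {0..y} (\<lambda>x. c * (f' x - g' x) - h' x)
      = c * (integral {0..y} f' - integral {0..y} g') - integral {0..y} h'"
    using integral_diff[OF integrable_cmul[OF integrable_diff[OF int[OF f(1)] int[OF g(1)]]] int[OF h(1)]]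
      integral_diff[OF int[OF f(1)] int[OF g(1)]] by simp
  also have "\<dots> = c * (f y - g y) - h y"
    using weak_deriv_primitive[OF f y] weak_deriv_primitive[OF g y] weak_deriv_primitive[OF h y] by simp
  finally show ?thesis .
qed

lemma uniform_limit_primitive_Lp:
  assumes p: "p \<ge> 1" and g: "\<forall>\<^sub>F s in F. in_Lp p (g s)"
    and lim: "((\<lambda>s. Lp_pow p (g s)) \<longlongrightarrow> 0) F"
  shows "uniform_limit {0..1} (\<lambda>s x. integral {0..x} (g s)) (\<lambda>_. 0) F"
proof (rule uniform_limitI)
  fix e :: real assume e: "e > 0"
  have "\<forall>\<^sub>F s in F. Lp_pow p (g s) < e powr p"
    using order_tendstoD(2)[OF lim] e by simp
  with g show "\<forall>\<^sub>F s in F. \<forall>x\<in>{0..1}. dist (integral {0..x} (g s)) 0 < e"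
  proof eventually_elim
    case (elim s)
    have "Lp_pow p (g s) powr (1 / p) < (e powr p) powr (1 / p)"
      using elim p Lp_pow_nonneg by (intro powr_less_mono2) auto
    then have small: "Lp_pow p (g s) powr (1 / p) < e" using p e by (simp add: powr_powr)
    show ?case
    proof
      fix x :: real assume "x \<in> {0..1}"
      then show "dist (integral {0..x} (g s)) 0 < e"
        using abs_primitive_le_Lp[OF elim(1) p, of x] small by simp
    qed
  qed
qed

section \<open>The Dirichlet problem \<open>w'' = g\<close> on \<open>(0,1)\<close>\<close>

lemma dirichlet_deriv_bound:
  fixes w w' g :: "real \<Rightarrow> real"
  assumes w: "continuous_on {0..1} w" "w 0 = 0" "w 1 = 0"
    and d: "\<forall>x\<in>{0<..<1}. (w has_real_derivative w' x) (at x) \<and> (w' has_real_derivative g x) (at x)"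
    and g: "continuous_on {0..1} g" and y: "y \<in> {0<..<1}"
  shows "\<bar>w' y\<bar> \<le> integral {0..1} (\<lambda>x. \<bar>g x\<bar>)"
proof -
  have "\<exists>\<xi>>0. \<xi> < 1 \<and> (*) (w' \<xi>) = (\<lambda>v. 0)"
    by (rule Rolle_deriv) (use w d in \<open>auto intro: has_field_derivative_imp_has_derivative\<close>)
  then obtain \<xi> where \<xi>: "0 < \<xi>" "\<xi> < 1" and "(*) (w' \<xi>) = (\<lambda>v. 0)" by blast
  then have w'\<xi>: "w' \<xi> = 0" by (metis mult_cancel_left1)
  define lo where "lo = min \<xi> y"
  define hi where "hi = max \<xi> y"
  have sub: "{lo..hi} \<subseteq> {0<..<1}" using y \<xi> by (auto simp: lo_def hi_def)
  have g_lohi: "continuous_on {lo..hi} g" using sub by (intro continuous_on_subset[OF g]) auto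
  have "(g has_integral (w' hi - w' lo)) {lo..hi}"
  proof (rule fundamental_theorem_of_calculus_interior)
    show "continuous_on {lo..hi} w'"
      using sub d by (intro continuous_at_imp_continuous_on ballI DERIV_isCont) auto
    show "(w' has_vector_derivative g x) (at x)" if "x \<in> {lo<..<hi}" for x
      using that sub d unfolding has_real_derivative_iff_has_vector_derivative[symmetric]
      by (meson greaterThanLessThan_subseteq_atLeastAtMost_iff order_refl subsetD)
  qed (simp add: lo_def hi_def)
  then have "integral {lo..hi} g = w' hi - w' lo" by (rule integral_unique)
  moreover have "norm (integral {lo..hi} g) \<le> integral {lo..hi} (\<lambda>x. \<bar>g x\<bar>)"
    using g_lohi by (intro integral_norm_bound_integral integrable_continuous_interval continuous_intros) auto
  ultimately have "\<bar>w' hi - w' lo\<bar> \<le> integral {lo..hi} (\<lambda>x. \<bar>g x\<bar>)" by simp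
  also have "\<dots> \<le> integral {0..1} (\<lambda>x. \<bar>g x\<bar>)"
    using sub g_lohi g by (intro integral_subset_le integrable_continuous_interval continuous_intros) auto
  finally show ?thesis using w'\<xi> by (cases "\<xi> \<le> y") (auto simp: lo_def hi_def)
qed

lemma solves_dirichlet_abs_le:
  assumes w: "solves_dirichlet g w" and g: "continuous_on {0..1} g" and x: "x \<in> {0..1}"
  shows "\<bar>w x\<bar> \<le> integral {0..1} (\<lambda>y. \<bar>g y\<bar>)"
proof -
  obtain w' where wc: "continuous_on {0..1} w" and w0: "w 0 = 0" and w1: "w 1 = 0"
    and d: "\<forall>x\<in>{0<..<1}. (w has_real_derivative w' x) (at x) \<and> (w' has_real_derivative g x) (at x)"
    using w unfolding solves_dirichlet_def by blast
  have G: "integral {0..1} (\<lambda>y. \<bar>g y\<bar>) \<ge> 0"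
    using g by (intro integral_nonneg integrable_continuous_interval continuous_intros) auto
  show ?thesis
  proof (cases "x = 0")
    case False
    then have x01: "0 < x" "x \<le> 1" using x by auto
    have "continuous_on {0..x} w" using wc x01 by (auto intro: continuous_on_subset)
    moreover have "w differentiable (at u)" if "0 < u" "u < x" for u
      using d that x01 by (auto simp: real_differentiable_def)
    ultimately obtain l \<eta> where \<eta>: "0 < \<eta>" "\<eta> < x" and l: "DERIV w \<eta> :> l"
      and wx: "w x - w 0 = (x - 0) * l"
      using MVT[OF x01(1)] by blast
    have "l = w' \<eta>" using DERIV_unique[OF l] d \<eta> x01 by auto
    then have "\<bar>w x\<bar> = x * \<bar>w' \<eta>\<bar>" using wx w0 x01 by (simp add: abs_mult)
    also have "\<dots> \<le> 1 * integral {0..1} (\<lambda>y. \<bar>g y\<bar>)"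
      using dirichlet_deriv_bound[OF wc w0 w1 d g, of \<eta>] \<eta> x01 by (intro mult_mono) auto
    finally show ?thesis by simp
  qed (use w0 G in simp)
qed

lemma solves_dirichlet_exists:
  assumes g: "continuous_on {0..1} g"
  shows "\<exists>w. solves_dirichlet g w"
proof -
  define G where "G = (\<lambda>x. integral {0..x} g)"
  define W where "W = (\<lambda>x. integral {0..x} G)"
  have G: "continuous_on {0..1} G" unfolding G_def
    using g by (intro indefinite_integral_continuous_1 integrable_continuous_interval)
  have W: "continuous_on {0..1} W" unfolding W_def
    using G by (intro indefinite_integral_continuous_1 integrable_continuous_interval)
  have "(G has_real_derivative g x) (at x)" "(W has_real_derivative G x) (at x)"
    if "x \<in> {0<..<1}" for x
    using integral_has_real_derivative[OF g, of x] integral_has_real_derivative[OF G, of x] that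
      at_within_interior[of x "{0..1}"] by (simp_all add: G_def W_def)
  then have "\<forall>x\<in>{0<..<1}. ((\<lambda>x. W x - x * W 1) has_real_derivative G x - W 1) (at x) \<and>
      ((\<lambda>x. G x - W 1) has_real_derivative g x) (at x)"
    by (auto intro!: derivative_eq_intros)
  moreover have "continuous_on {0..1} (\<lambda>x. W x - x * W 1)" using W by (intro continuous_intros)
  ultimately have "solves_dirichlet g (\<lambda>x. W x - x * W 1)"
    unfolding solves_dirichlet_def by (auto simp: W_def)
  then show ?thesis by blast
qed

lemma solves_dirichlet_diff_quotient:
  assumes "solves_dirichlet g1 w1" "solves_dirichlet g2 w2" "solves_dirichlet h v"
  shows "solves_dirichlet (\<lambda>x. (g1 x - g2 x) / d - h x) (\<lambda>x. (w1 x - w2 x) / d - v x)"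
proof -
  obtain w1' w2' v' where
    "\<forall>x\<in>{0<..<1}. (w1 has_real_derivative w1' x) (at x) \<and> (w1' has_real_derivative g1 x) (at x)"
    "\<forall>x\<in>{0<..<1}. (w2 has_real_derivative w2' x) (at x) \<and> (w2' has_real_derivative g2 x) (at x)"
    "\<forall>x\<in>{0<..<1}. (v has_real_derivative v' x) (at x) \<and> (v' has_real_derivative h x) (at x)"
    using assms unfolding solves_dirichlet_def by metis
  then have "\<forall>x\<in>{0<..<1}.
      ((\<lambda>x. (w1 x - w2 x) / d - v x) has_real_derivative (w1' x - w2' x) / d - v' x) (at x) \<and>
      ((\<lambda>x. (w1' x - w2' x) / d - v' x) has_real_derivative (g1 x - g2 x) / d - h x) (at x)"
    by (auto simp: divide_inverse intro!: derivative_eq_intros)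
  moreover have "continuous_on {0..1} (\<lambda>x. (w1 x - w2 x) / d - v x)"
    using assms unfolding solves_dirichlet_def divide_inverse by (intro continuous_intros) auto
  ultimately show ?thesis
    using assms unfolding solves_dirichlet_def by auto
qed

lemma solves_dirichlet_has_time_derivative:
  assumes w: "\<And>s. s \<in> T \<Longrightarrow> solves_dirichlet (g s) (w s)"
    and g: "\<And>s. s \<in> T \<Longrightarrow> continuous_on {0..1} (g s)" and t: "t \<in> T"
    and v: "solves_dirichlet h v" and h: "continuous_on {0..1} h"
    and lim: "uniform_limit {0..1} (\<lambda>s y. (g s y - g t y) / (s - t)) h (at t within T)"
    and x: "x \<in> {0..1}"
  shows "((\<lambda>s. w s x) has_real_derivative v x) (at t within T)"
  unfolding has_field_derivative_iff
proof (rule tendstoI)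
  fix e :: real assume e: "e > 0"
  have "\<forall>\<^sub>F s in at t within T. s \<in> T \<and> s \<noteq> t"
    unfolding eventually_at by (intro exI[of _ 1]) auto
  moreover have "e / 2 > 0" using e by simp
  note uniform_limitD[OF lim this]
  ultimately show "\<forall>\<^sub>F s in at t within T. dist ((w s x - w t x) / (s - t)) (v x) < e"
  proof eventually_elim
    case (elim s)
    define q where "q y = (g s y - g t y) / (s - t) - h y" for y
    have q: "continuous_on {0..1} q" unfolding q_def using g[of s] g[OF t] h elim(1)
      by (intro continuous_intros) auto
    have "\<bar>(w s x - w t x) / (s - t) - v x\<bar> \<le> integral {0..1} (\<lambda>y. \<bar>q y\<bar>)"
      using solves_dirichlet_abs_le[OF solves_dirichlet_diff_quotient[OF w[of s] w[OF t] v] _ x]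
        q elim(1) by (simp add: q_def)
    also have "\<dots> \<le> integral {0..1} (\<lambda>y::real. e / 2)"
      using elim(2) q by (intro integral_le integrable_continuous_interval continuous_intros)
        (auto simp: q_def dist_real_def less_imp_le)
    finally show ?case using e by (simp add: dist_real_def)
  qed
qed

section \<open>Difference quotients composed with \<open>C\<^sup>1\<close> maps\<close>

lemma C1_uniform_linearization:
  fixes f f' :: "real \<Rightarrow> real"
  assumes f: "\<And>u. (f has_real_derivative f' u) (at u)" and f': "continuous_on UNIV f'"
    and e: "e > 0"
  obtains \<delta> where "\<delta> > 0"
    "\<And>a b. \<bar>b\<bar> \<le> R \<Longrightarrow> \<bar>a - b\<bar> < \<delta> \<Longrightarrow> \<bar>f a - f b - f' b * (a - b)\<bar> \<le> e * \<bar>a - b\<bar>"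
proof -
  have "uniformly_continuous_on (cball 0 (R + 1)) f'"
    by (rule compact_uniformly_continuous) (auto intro: continuous_on_subset[OF f'])
  then obtain \<delta>0 where \<delta>0: "\<delta>0 > 0"
    and uc: "\<And>u v. u \<in> cball 0 (R + 1) \<Longrightarrow> v \<in> cball 0 (R + 1) \<Longrightarrow> dist u v < \<delta>0 \<Longrightarrow>
      dist (f' u) (f' v) < e"
    using e unfolding uniformly_continuous_on_def by metis
  show ?thesis
  proof (rule that[of "min 1 \<delta>0"])
    fix a b :: real assume b: "\<bar>b\<bar> \<le> R" and ab: "\<bar>a - b\<bar> < min 1 \<delta>0"
    obtain \<xi> where \<xi>: "\<bar>\<xi> - b\<bar> \<le> \<bar>a - b\<bar>" and mvt: "f a - f b = (a - b) * f' \<xi>"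
    proof (cases a b rule: linorder_cases)
      case less
      then obtain z where "a < z" "z < b" "f b - f a = (b - a) * f' z" using MVT2[OF less f] by blast
      then show ?thesis by (intro that[of z]) (auto simp: algebra_simps)
    next
      case greater
      then obtain z where "b < z" "z < a" "f a - f b = (a - b) * f' z" using MVT2[OF greater f] by blast
      then show ?thesis by (intro that[of z]) auto
    qed (use that in auto)
    have "\<bar>\<xi>\<bar> \<le> R + 1" using \<xi> ab b by linarith
    then have "\<bar>f' \<xi> - f' b\<bar> \<le> e"
      using uc[of \<xi> b] \<xi> ab b by (auto simp: dist_real_def)
    then have "\<bar>f' \<xi> - f' b\<bar> * \<bar>a - b\<bar> \<le> e * \<bar>a - b\<bar>" by (rule mult_right_mono) simp
    moreover have "f a - f b - f' b * (a - b) = (f' \<xi> - f' b) * (a - b)"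
      by (simp add: mvt algebra_simps)
    ultimately show "\<bar>f a - f b - f' b * (a - b)\<bar> \<le> e * \<bar>a - b\<bar>"
      by (simp add: abs_mult)
  qed (use \<delta>0 in simp)
qed

lemma abs_diff_quotient_chain_le:
  fixes a b h d D fa fb \<eta> C :: real
  assumes lin: "\<bar>fa - fb - D * (a - b)\<bar> \<le> \<eta> * \<bar>a - b\<bar>" and h: "h \<noteq> 0" and C: "\<bar>D\<bar> \<le> C"
  shows "\<bar>(fa - fb) / h - D * d\<bar> \<le> \<eta> * \<bar>(a - b) / h\<bar> + C * \<bar>(a - b) / h - d\<bar>"
proof -
  have "(fa - fb) / h - D * d = (fa - fb - D * (a - b)) / h + D * ((a - b) / h - d)"
    using h by (simp add: field_simps)
  also have "\<bar>\<dots>\<bar> \<le> \<bar>fa - fb - D * (a - b)\<bar> / \<bar>h\<bar> + \<bar>D\<bar> * \<bar>(a - b) / h - d\<bar>"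
    by (metis abs_divide abs_mult abs_triangle_ineq)
  also have "\<dots> \<le> \<eta> * \<bar>a - b\<bar> / \<bar>h\<bar> + C * \<bar>(a - b) / h - d\<bar>"
    using lin C by (intro add_mono divide_right_mono mult_right_mono) auto
  finally show ?thesis by (simp add: abs_divide)
qed

lemma uniform_limit_diff_quotient_compose:
  fixes f f' :: "real \<Rightarrow> real" and Z :: "real \<Rightarrow> 'a \<Rightarrow> real"
  assumes f: "\<And>u. (f has_real_derivative f' u) (at u)" and f': "continuous_on UNIV f'"
    and Z: "uniform_limit Y (\<lambda>s y. (Z s y - Z t y) / (s - t)) D (at t within T)"
    and R: "\<And>y. y \<in> Y \<Longrightarrow> \<bar>Z t y\<bar> \<le> R" and M: "\<And>y. y \<in> Y \<Longrightarrow> \<bar>D y\<bar> \<le> M"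
  shows "uniform_limit Y (\<lambda>s y. (f (Z s y) - f (Z t y)) / (s - t)) (\<lambda>y. f' (Z t y) * D y)
    (at t within T)"
proof (rule uniform_limitI)
  fix e :: real assume e: "e > 0"
  obtain C where C: "\<And>u. u \<in> cball 0 R \<Longrightarrow> norm (f' u) \<le> C"
    using continuous_on_compact_bound[OF compact_cball continuous_on_subset[OF f']] by blast
  define M1 where "M1 = \<bar>M\<bar> + 1"
  have M1: "M1 > 0" by (simp add: M1_def)
  obtain \<delta> where \<delta>: "\<delta> > 0"
    and lin: "\<And>a b. \<bar>b\<bar> \<le> R \<Longrightarrow> \<bar>a - b\<bar> < \<delta> \<Longrightarrow>
      \<bar>f a - f b - f' b * (a - b)\<bar> \<le> e / (2 * M1) * \<bar>a - b\<bar>"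
    using C1_uniform_linearization[OF f f', of "e / (2 * M1)"] e M1 by auto
  define \<epsilon> where "\<epsilon> = min 1 (e / (2 * (\<bar>C\<bar> + 1)))"
  have "\<epsilon> > 0" using e by (simp add: \<epsilon>_def)
  have "\<forall>\<^sub>F s in at t within T. s \<noteq> t \<and> \<bar>s - t\<bar> < \<delta> / M1"
    unfolding eventually_at using \<delta> M1 by (intro exI[of _ "\<delta> / M1"]) (auto simp: dist_real_def)
  with uniform_limitD[OF Z \<open>\<epsilon> > 0\<close>] show "\<forall>\<^sub>F s in at t within T. \<forall>y\<in>Y.
      dist ((f (Z s y) - f (Z t y)) / (s - t)) (f' (Z t y) * D y) < e"
  proof eventually_elim
    case (elim s)
    show ?case
    proof
      fix y assume y: "y \<in> Y"
      define a b where "a = Z s y" and "b = Z t y"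
      define q where "q = (a - b) / (s - t)"
      have qD: "\<bar>q - D y\<bar> < \<epsilon>" using elim(1) y by (simp add: q_def a_def b_def dist_real_def)
      then have q: "\<bar>q\<bar> < M1" using M[OF y] unfolding M1_def \<epsilon>_def by linarith
      have "\<bar>a - b\<bar> = \<bar>s - t\<bar> * \<bar>q\<bar>" using elim(2) by (simp add: q_def abs_divide)
      also have "\<dots> < \<delta> / M1 * M1" using elim(2) q \<delta> M1 by (intro mult_strict_mono) auto
      finally have "\<bar>f a - f b - f' b * (a - b)\<bar> \<le> e / (2 * M1) * \<bar>a - b\<bar>"
        using lin[OF R[OF y, folded b_def], of a] M1 by simp
      then have "\<bar>(f a - f b) / (s - t) - f' b * D y\<bar> \<le> e / (2 * M1) * \<bar>q\<bar> + \<bar>C\<bar> * \<bar>q - D y\<bar>"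
        unfolding q_def using C[of b] R[OF y] elim(2)
        by (intro abs_diff_quotient_chain_le) (auto simp: b_def)
      also have "\<dots> < e"
      proof -
        have "e / (2 * M1) * \<bar>q\<bar> < e / (2 * M1) * M1" using q e M1 by (intro mult_strict_left_mono) auto
        then have "e / (2 * M1) * \<bar>q\<bar> < e / 2" using M1 by simp
        moreover have "\<bar>C\<bar> * \<bar>q - D y\<bar> \<le> \<bar>C\<bar> * (e / (2 * (\<bar>C\<bar> + 1)))"
          using qD by (intro mult_left_mono) (auto simp: \<epsilon>_def)
        moreover have "\<bar>C\<bar> * (e / (2 * (\<bar>C\<bar> + 1))) \<le> e / 2" using e by (simp add: field_simps)
        ultimately show ?thesis by linarith
      qed
      finally show "dist ((f (Z s y) - f (Z t y)) / (s - t)) (f' (Z t y) * D y) < e"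
        by (simp add: dist_real_def a_def b_def)
    qed
  qed
qed

section \<open>The signed power \<open>sgn u |u|\<^sup>r\<close>\<close>

definition signed_powr :: "real \<Rightarrow> real \<Rightarrow> real" where
  "signed_powr r u = sgn u * \<bar>u\<bar> powr r"

text \<open>The case \<open>r = 1\<close> is separate because \<open>0 powr 0 = 0\<close>.\<close>
definition signed_powr_deriv :: "real \<Rightarrow> real \<Rightarrow> real" where
  "signed_powr_deriv r u = (if r = 1 then 1 else r * \<bar>u\<bar> powr (r - 1))"

lemma abs_signed_powr: "\<bar>signed_powr r u\<bar> = \<bar>u\<bar> powr r"
  by (cases "u = 0") (auto simp: signed_powr_def sgn_if)

lemma signed_powr_deriv_nonneg: "r \<ge> 0 \<Longrightarrow> signed_powr_deriv r u \<ge> 0"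
  by (simp add: signed_powr_deriv_def)

lemma signed_powr_deriv_mono:
  "r \<ge> 1 \<Longrightarrow> \<bar>u\<bar> \<le> \<bar>v\<bar> \<Longrightarrow> signed_powr_deriv r u \<le> signed_powr_deriv r v"
  by (auto simp: signed_powr_deriv_def intro: powr_mono2)

lemma has_real_derivative_signed_powr:
  assumes r: "r \<ge> 1"
  shows "(signed_powr r has_real_derivative signed_powr_deriv r u) (at u)"
proof (cases "r = 1")
  case True
  then have "signed_powr r = (\<lambda>u. u)"
    by (auto simp: signed_powr_def sgn_if)
  then show ?thesis using True by (simp add: signed_powr_deriv_def)
next
  case False
  then have r1: "r > 1" using r by simp
  consider "u > 0" | "u < 0" | "u = 0" by linarith
  then show ?thesis
  proof cases
    case 1
    have "((\<lambda>v. v powr r) has_real_derivative signed_powr_deriv r u) (at u)"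
      using has_real_derivative_powr[OF 1, of r] 1 False by (simp add: signed_powr_deriv_def)
    then show ?thesis
      by (rule has_field_derivative_transform_within_open[of _ _ _ "{0<..}"])
         (use 1 in \<open>auto simp: signed_powr_def\<close>)
  next
    case 2
    have "((\<lambda>v. - ((- v) powr r)) has_real_derivative signed_powr_deriv r u) (at u)"
      using 2 False by (auto intro!: derivative_eq_intros simp: signed_powr_deriv_def)
    then show ?thesis
      by (rule has_field_derivative_transform_within_open[of _ _ _ "{..<0}"])
         (use 2 in \<open>auto simp: signed_powr_def\<close>)
  next
    case 3
    have "((\<lambda>v. \<bar>v\<bar> powr (r - 1)) \<longlongrightarrow> 0) (at 0)"
      by (rule tendsto_zero_powrI) (use r1 in \<open>auto intro!: tendsto_eq_intros\<close>)
    then have "((\<lambda>v. (signed_powr r v - signed_powr r 0) / (v - 0)) \<longlongrightarrow> 0) (at 0)"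
    proof (rule Lim_transform_within[OF _ zero_less_one])
      fix v :: real assume "0 < dist v 0"
      then have v: "v \<noteq> 0" by simp
      have "\<bar>v\<bar> powr r = \<bar>v\<bar> * \<bar>v\<bar> powr (r - 1)"
        using v powr_add[of "\<bar>v\<bar>" 1 "r - 1"] by simp
      then show "\<bar>v\<bar> powr (r - 1) = (signed_powr r v - signed_powr r 0) / (v - 0)"
        using v by (auto simp: signed_powr_def sgn_if field_simps)
    qed
    then show ?thesis using 3 False by (simp add: has_field_derivative_iff signed_powr_deriv_def)
  qed
qed

lemma continuous_on_signed_powr: "r \<ge> 1 \<Longrightarrow> continuous_on UNIV (signed_powr r)"
  using has_real_derivative_signed_powr by (blast intro: continuous_at_imp_continuous_on DERIV_isCont)

lemma continuous_on_signed_powr_deriv: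
  assumes "r \<ge> 1" shows "continuous_on UNIV (signed_powr_deriv r)"
proof (cases "r = 1")
  case False
  then have "continuous_on UNIV (\<lambda>u::real. r * \<bar>u\<bar> powr (r - 1))"
    using assms by (intro continuous_intros continuous_on_powr') auto
  then show ?thesis using False by (simp add: signed_powr_deriv_def)
qed (simp add: signed_powr_deriv_def)

lemma Youngs_inequality_0_nonneg:
  fixes a b :: real
  assumes "0 \<le> \<alpha>" "0 \<le> \<beta>" "\<alpha> + \<beta> = 1" "a \<ge> 0" "b \<ge> 0"
  shows "a powr \<alpha> * b powr \<beta> \<le> \<alpha> * a + \<beta> * b"
proof (cases "a = 0 \<or> b = 0")
  case True
  then show ?thesis using assms by auto
qed (use Youngs_inequality_0[OF assms(1-3)] assms in auto)

lemma signed_powr_deriv_Young_bound: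
  fixes p S W E \<sigma> :: real
  assumes p: "p \<ge> 2" and S: "S \<ge> 0" and W: "W \<ge> 0" and \<sigma>: "\<sigma> > 0" and SE: "S powr p \<le> p * E"
  shows "(signed_powr_deriv (p - 1) S * W powr (1 / p)) powr (p / (p - 1))
    \<le> p * (p - 1) powr (p / (p - 1)) * ((p - 2) * \<sigma> * E + \<sigma> powr (- (p - 2)) * W)"
proof (cases "p = 2")
  case True
  then show ?thesis using W \<sigma> by (simp add: signed_powr_deriv_def powr_powr)
next
  case False
  then have p2: "p > 2" using p by simp
  define \<alpha> where "\<alpha> = (p - 2) / (p - 1)"
  define \<beta> where "\<beta> = 1 / (p - 1)"
  have E: "E \<ge> 0" using order_trans[OF powr_ge_zero SE] p by (simp add: zero_le_mult_iff)
  have "(signed_powr_deriv (p - 1) S * W powr (1 / p)) powr (p / (p - 1))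
      = (p - 1) powr (p / (p - 1)) * ((\<sigma> * S powr p) powr \<alpha> * (\<sigma> powr (- (p - 2)) * W) powr \<beta>)"
  proof -
    have "\<sigma> powr \<alpha> * (\<sigma> powr (- (p - 2))) powr \<beta> = 1"
      using p2 \<sigma> by (simp add: \<alpha>_def \<beta>_def powr_powr powr_add[symmetric] field_simps)
    moreover have "(S powr (p - 2)) powr (p / (p - 1)) = (S powr p) powr \<alpha>"
      "(W powr (1 / p)) powr (p / (p - 1)) = W powr \<beta>"
      using p2 by (simp_all add: \<alpha>_def \<beta>_def powr_powr field_simps)
    ultimately show ?thesis using p2 S W \<sigma>
      by (simp add: signed_powr_deriv_def powr_mult mult_ac)
  qed
  also have "\<dots> \<le> (p - 1) powr (p / (p - 1)) * (\<alpha> * (\<sigma> * S powr p) + \<beta> * (\<sigma> powr (- (p - 2)) * W))"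
    using p2 \<sigma> W by (intro mult_left_mono Youngs_inequality_0_nonneg) (auto simp: \<alpha>_def \<beta>_def field_simps)
  also have "\<alpha> * (\<sigma> * S powr p) + \<beta> * (\<sigma> powr (- (p - 2)) * W)
      \<le> p * ((p - 2) * \<sigma> * E + \<sigma> powr (- (p - 2)) * W)"
  proof -
    have "\<alpha> * (\<sigma> * S powr p) \<le> (p - 2) * (\<sigma> * (p * E))"
      using p2 \<sigma> SE E by (intro mult_mono) (auto simp: \<alpha>_def divide_le_eq)
    moreover have "\<beta> * (\<sigma> powr (- (p - 2)) * W) \<le> p * (\<sigma> powr (- (p - 2)) * W)"
    proof (rule mult_right_mono)
      have "\<beta> \<le> 1" using p2 by (simp add: \<beta>_def)
      then show "\<beta> \<le> p" using p2 by simp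
    qed (use W in simp)
    ultimately show ?thesis by (simp add: algebra_simps)
  qed
  finally show ?thesis using p2 by (simp add: mult_left_mono mult_ac)
qed

lemma solves_dirichlet_signed_powr_Lq_bound:
  assumes p: "p \<ge> 2" and \<beta>: "continuous_on {0..1} \<beta>" "\<forall>x\<in>{0..1}. 0 \<le> \<beta> x \<and> \<beta> x \<le> 1"
    and u: "continuous_on {0..1} u" "\<forall>x\<in>{0..1}. \<bar>u x\<bar> \<le> S"
    and w: "solves_dirichlet (\<lambda>x. \<beta> x * signed_powr (p - 1) (u x)) w"
  shows "integral {0..1} (\<lambda>x. \<bar>w x\<bar> powr (p / (p - 1))) \<le> S powr p"
proof -
  define g where "g x = \<beta> x * signed_powr (p - 1) (u x)" for x
  have g: "continuous_on {0..1} g"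
    unfolding g_def using \<beta> continuous_on_compose2[OF continuous_on_signed_powr u(1)] p
    by (intro continuous_intros) auto
  have "\<bar>g x\<bar> \<le> S powr (p - 1)" if "x \<in> {0..1}" for x
  proof -
    have "\<bar>g x\<bar> = \<beta> x * \<bar>u x\<bar> powr (p - 1)"
      using \<beta> that by (simp add: g_def abs_mult abs_signed_powr)
    also have "\<dots> \<le> 1 * \<bar>u x\<bar> powr (p - 1)" using \<beta> that by (intro mult_right_mono) auto
    also have "\<dots> \<le> S powr (p - 1)" using u that p by (simp add: powr_mono2)
    finally show ?thesis .
  qed
  then have "integral {0..1} (\<lambda>x. \<bar>g x\<bar>) \<le> integral {0..1} (\<lambda>x::real. S powr (p - 1))"
    using g by (intro integral_le integrable_continuous_interval continuous_intros) auto
  then have "\<bar>w x\<bar> \<le> S powr (p - 1)" if "x \<in> {0..1}" for x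
    using solves_dirichlet_abs_le[OF w[folded g_def] g that] by simp
  then have "integral {0..1} (\<lambda>x. \<bar>w x\<bar> powr (p / (p - 1))) \<le> (S powr (p - 1)) powr (p / (p - 1))"
    using w p by (intro integral_abs_powr_le_const) (auto simp: solves_dirichlet_def)
  also have "\<dots> = S powr p" using p by (simp add: powr_powr)
  finally show ?thesis .
qed

lemma solves_dirichlet_linearized_bound:
  assumes p: "p \<ge> 2" and \<beta>: "continuous_on {0..1} \<beta>" "\<forall>x\<in>{0..1}. 0 \<le> \<beta> x \<and> \<beta> x \<le> 1"
    and u: "continuous_on {0..1} u" "\<forall>x\<in>{0..1}. \<bar>u x\<bar> \<le> S"
    and ut: "in_Lp p ut" "continuous_on {0..1} ut"
    and v: "solves_dirichlet (\<lambda>x. \<beta> x * signed_powr_deriv (p - 1) (u x) * ut x) v"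
    and x: "x \<in> {0..1}"
  shows "\<bar>v x\<bar> \<le> signed_powr_deriv (p - 1) S * integral {0..1} (\<lambda>x. \<beta> x * \<bar>ut x\<bar> powr p) powr (1 / p)"
proof -
  define h where "h x = \<beta> x * signed_powr_deriv (p - 1) (u x) * ut x" for x
  define D where "D = signed_powr_deriv (p - 1) S"
  have p1: "p - 1 \<ge> 1" using p by simp
  have h: "continuous_on {0..1} h"
    unfolding h_def using \<beta> u ut continuous_on_compose2[OF continuous_on_signed_powr_deriv[OF p1] u(1)]
    by (intro continuous_intros) auto
  have \<beta>ut: "(\<lambda>x. \<beta> x * \<bar>ut x\<bar>) integrable_on {0..1}"
    using \<beta> ut by (intro integrable_continuous_interval continuous_intros) auto
  have "\<bar>h y\<bar> \<le> D * (\<beta> y * \<bar>ut y\<bar>)" if "y \<in> {0..1}" for y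
  proof -
    have "\<bar>h y\<bar> = signed_powr_deriv (p - 1) (u y) * (\<beta> y * \<bar>ut y\<bar>)"
      using \<beta> that signed_powr_deriv_nonneg[of "p - 1"] p by (simp add: h_def abs_mult)
    also have "\<dots> \<le> D * (\<beta> y * \<bar>ut y\<bar>)"
    proof (rule mult_right_mono)
      have "\<bar>u y\<bar> \<le> \<bar>S\<bar>" using u(2) that by fastforce
      then show "signed_powr_deriv (p - 1) (u y) \<le> D"
        unfolding D_def by (rule signed_powr_deriv_mono[OF p1])
    qed (use \<beta> that in auto)
    finally show ?thesis .
  qed
  then have "integral {0..1} (\<lambda>y. \<bar>h y\<bar>) \<le> integral {0..1} (\<lambda>y. D * (\<beta> y * \<bar>ut y\<bar>))"
    using h \<beta>ut \<beta> ut
    by (intro integral_le integrable_continuous_interval continuous_intros integrable_cmul) auto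
  also have "\<dots> \<le> D * integral {0..1} (\<lambda>x. \<beta> x * \<bar>ut x\<bar> powr p) powr (1 / p)"
    using weighted_L1_le_Lp[OF ut(1) _ continuous_imp_measurable_on_sets_lebesgue[OF \<beta>(1)] \<beta>(2)] p
      signed_powr_deriv_nonneg[of "p - 1" S] by (auto simp: D_def intro: mult_left_mono)
  finally show ?thesis
    using solves_dirichlet_abs_le[OF v[folded h_def] h x] by (simp add: D_def)
qed

lemma solves_dirichlet_linearized_Lq_bound:
  assumes p: "p \<ge> 2" and \<beta>: "continuous_on {0..1} \<beta>" "\<forall>x\<in>{0..1}. 0 \<le> \<beta> x \<and> \<beta> x \<le> 1"
    and u: "continuous_on {0..1} u" "\<forall>x\<in>{0..1}. \<bar>u x\<bar> \<le> S" and S: "S powr p \<le> p * E"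
    and ut: "in_Lp p ut" "continuous_on {0..1} ut"
    and v: "solves_dirichlet (\<lambda>x. \<beta> x * signed_powr_deriv (p - 1) (u x) * ut x) v"
    and \<sigma>: "\<sigma> > 0"
  shows "integral {0..1} (\<lambda>x. \<bar>v x\<bar> powr (p / (p - 1)))
    \<le> p * (p - 1) powr (p / (p - 1)) *
      ((p - 2) * \<sigma> * E + \<sigma> powr (- (p - 2)) * integral {0..1} (\<lambda>x. \<beta> x * \<bar>ut x\<bar> powr p))"
proof -
  define W where "W = integral {0..1} (\<lambda>x. \<beta> x * \<bar>ut x\<bar> powr p)"
  have W: "W \<ge> 0"
    unfolding W_def using \<beta>(2)
    by (cases "(\<lambda>x. \<beta> x * \<bar>ut x\<bar> powr p) integrable_on {0..1}")
       (auto intro: integral_nonneg simp: not_integrable_integral)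
  have "S \<ge> 0" using u(2) abs_ge_zero[of "u 0"] by fastforce
  have "integral {0..1} (\<lambda>x. \<bar>v x\<bar> powr (p / (p - 1)))
      \<le> (signed_powr_deriv (p - 1) S * W powr (1 / p)) powr (p / (p - 1))"
    using solves_dirichlet_linearized_bound[OF p \<beta> u ut v] v p
    by (intro integral_abs_powr_le_const) (auto simp: solves_dirichlet_def W_def)
  also have "\<dots> \<le> p * (p - 1) powr (p / (p - 1)) * ((p - 2) * \<sigma> * E + \<sigma> powr (- (p - 2)) * W)"
    by (rule signed_powr_deriv_Young_bound[OF p \<open>S \<ge> 0\<close> W \<sigma> S])
  finally show ?thesis unfolding W_def .
qed

section \<open>Estimates along a strong solution\<close>

lemma smooth_on_01_continuous_on: "smooth_on_01 f \<Longrightarrow> continuous_on {0..1} f"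
  unfolding smooth_on_01_def by (metis DERIV_continuous_on)

lemma strong_solution_continuous_on:
  assumes "strong_solution p a z0 z1 z zx zxx zt ztx ztt" "p \<ge> 1" "t \<ge> 0"
  shows "continuous_on {0..1} (z t)" "continuous_on {0..1} (zt t)"
  using assms weak_deriv_continuous_on
  unfolding strong_solution_def in_W2p_W10p_def in_W10p_def by blast+

lemma strong_solution_Lp_pow_le_energy:
  assumes "strong_solution p a z0 z1 z zx zxx zt ztx ztt" "p \<ge> 1" "t \<ge> 0"
  shows "Lp_pow p (zx t) \<le> p * E_p p zx zt t"
proof -
  have "in_Lp p (zx t)" "in_Lp p (zt t)"
    using assms unfolding strong_solution_def in_W2p_W10p_def in_W10p_def has_weak_deriv_Lp_def
    by blast+
  then show ?thesis
    using Lp_pow_le_integral_sum_diff[of p "zx t" "zt t"] assms(2) by (simp add: E_p_def)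
qed

lemma E_p_nonneg:
  assumes "p \<ge> 0" shows "E_p p zx zt t \<ge> 0"
proof -
  have "integral {0..1} (\<lambda>x. \<bar>zx t x + zt t x\<bar> powr p + \<bar>zx t x - zt t x\<bar> powr p) \<ge> 0"
    by (cases "(\<lambda>x. \<bar>zx t x + zt t x\<bar> powr p + \<bar>zx t x - zt t x\<bar> powr p) integrable_on {0..1::real}")
       (auto intro: integral_nonneg simp: not_integrable_integral)
  then show ?thesis using assms unfolding E_p_def by simp
qed

lemma strong_solution_abs_le_energy:
  assumes sol: "strong_solution p a z0 z1 z zx zxx zt ztx ztt" and p: "p \<ge> 1" and t: "t \<ge> 0"
    and x: "x \<in> {0..1}"
  shows "\<bar>z t x\<bar> \<le> (p * E_p p zx zt t) powr (1 / p)"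
proof -
  have "has_weak_deriv_Lp p (z t) (zx t)" "z t 0 = 0"
    using sol t unfolding strong_solution_def in_W2p_W10p_def by blast+
  then have "\<bar>z t x\<bar> \<le> Lp_pow p (zx t) powr (1 / p)" using weak_deriv_abs_le p x by blast
  also have "\<dots> \<le> (p * E_p p zx zt t) powr (1 / p)"
    using strong_solution_Lp_pow_le_energy[OF sol p t] Lp_pow_nonneg p by (intro powr_mono2) auto
  finally show ?thesis .
qed

lemma strong_solution_uniform_diff_quotient:
  assumes sol: "strong_solution p a z0 z1 z zx zxx zt ztx ztt" and p: "p \<ge> 1" and t: "t \<ge> 0"
  shows "uniform_limit {0..1} (\<lambda>s y. (z s y - z t y) / (s - t)) (zt t) (at t within {0..})"
proof -
  have z: "\<And>s. s \<ge> 0 \<Longrightarrow> has_weak_deriv_Lp p (z s) (zx s) \<and> z s 0 = 0"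
    and zt: "has_weak_deriv_Lp p (zt t) (ztx t)" "zt t 0 = 0"
    and lim: "((\<lambda>s. Lp_pow p (\<lambda>x. (zx s x - zx t x) / (s - t) - ztx t x)) \<longlongrightarrow> 0) (at t within {0..})"
    using sol t unfolding strong_solution_def in_W2p_W10p_def in_W10p_def by blast+
  define Q where "Q s x = inverse (s - t) * (zx s x - zx t x) - ztx t x" for s x
  have ev: "\<forall>\<^sub>F s in at t within {0..}. s \<ge> 0"
    unfolding eventually_at by (intro exI[of _ 1]) auto
  have LQ: "in_Lp p (Q s)" if "s \<ge> 0" for s
    unfolding Q_def using z[OF that] z[OF t] zt(1) p
    by (intro in_Lp_diff in_Lp_cmult) (auto simp: has_weak_deriv_Lp_def)
  have "uniform_limit {0..1} (\<lambda>s y. integral {0..y} (Q s)) (\<lambda>_. 0) (at t within {0..})"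
  proof (rule uniform_limit_primitive_Lp[OF p])
    show "\<forall>\<^sub>F s in at t within {0..}. in_Lp p (Q s)" using ev by (rule eventually_mono) (rule LQ)
    show "((\<lambda>s. Lp_pow p (Q s)) \<longlongrightarrow> 0) (at t within {0..})"
      using lim by (simp add: Q_def[abs_def] divide_inverse mult.commute)
  qed
  then have "uniform_limit {0..1} (\<lambda>s y. integral {0..y} (Q s) + zt t y) (\<lambda>y. 0 + zt t y)
      (at t within {0..})"
    by (intro uniform_limit_add uniform_limit_const)
  moreover have "integral {0..y} (Q s) + zt t y = (z s y - z t y) / (s - t)"
    if "s \<ge> 0" "y \<in> {0..1}" for s y
    using integral_weak_deriv_lincomb[of p "z s" "zx s" "z t" "zx t" "zt t" "ztx t" y "inverse (s - t)"]
      z[OF that(1)] z[OF t] zt p that(2)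
    by (simp add: Q_def[abs_def] divide_inverse mult.commute)
  ultimately show ?thesis
    using uniform_limit_cong[where f = "\<lambda>s y. integral {0..y} (Q s) + zt t y"
        and g = "\<lambda>s y. (z s y - z t y) / (s - t)" and X = "{0..1}" and F = "at t within {0..}"
        and h = "\<lambda>y. 0 + zt t y" and i = "zt t"]
      eventually_mono[OF ev] by auto
qed

lemma strong_solution_source_time_derivative:
  assumes p: "p \<ge> 2" and \<beta>: "continuous_on {0..1} \<beta>"
    and sol: "strong_solution p a z0 z1 z zx zxx zt ztx ztt" and t: "t \<ge> 0"
    and v: "\<And>s. s \<ge> 0 \<Longrightarrow> solves_dirichlet (\<lambda>x. \<beta> x * signed_powr (p - 1) (z s x)) (v s)"
    and vt: "solves_dirichlet (\<lambda>x. \<beta> x * signed_powr_deriv (p - 1) (z t x) * zt t x) vt"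
    and x: "x \<in> {0..1}"
  shows "((\<lambda>s. v s x) has_real_derivative vt x) (at t within {0..})"
proof -
  have p1: "p - 1 \<ge> 1" using p by simp
  have zc: "continuous_on {0..1} (z s)" if "s \<ge> 0" for s
    using strong_solution_continuous_on(1)[OF sol _ that] p by simp
  have ztc: "continuous_on {0..1} (zt t)" using strong_solution_continuous_on(2)[OF sol _ t] p by simp
  have dc: "continuous_on {0..1} (\<lambda>y. signed_powr_deriv (p - 1) (z t y) * zt t y)"
    using continuous_on_compose2[OF continuous_on_signed_powr_deriv[OF p1] zc[OF t]] ztc
    by (intro continuous_intros) auto
  obtain R where R: "\<And>y. y \<in> {0..1} \<Longrightarrow> \<bar>z t y\<bar> \<le> R"
    using continuous_on_compact_bound[OF compact_Icc zc[OF t]] by auto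
  obtain M where M: "\<And>y. y \<in> {0..1} \<Longrightarrow> \<bar>zt t y\<bar> \<le> M"
    using continuous_on_compact_bound[OF compact_Icc ztc] by auto
  have "uniform_limit {0..1}
      (\<lambda>s y. \<beta> y * ((signed_powr (p - 1) (z s y) - signed_powr (p - 1) (z t y)) / (s - t)))
      (\<lambda>y. \<beta> y * (signed_powr_deriv (p - 1) (z t y) * zt t y)) (at t within {0..})"
    using uniform_limit_diff_quotient_compose[OF has_real_derivative_signed_powr[OF p1]
        continuous_on_signed_powr_deriv[OF p1] strong_solution_uniform_diff_quotient[OF sol _ t] R M]
      compact_imp_bounded[OF compact_continuous_image[OF \<beta> compact_Icc]]
      compact_imp_bounded[OF compact_continuous_image[OF dc compact_Icc]] p
    by (intro uniform_lim_mult uniform_limit_const) auto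
  then have lim: "uniform_limit {0..1} (\<lambda>s y. (\<beta> y * signed_powr (p - 1) (z s y) -
      \<beta> y * signed_powr (p - 1) (z t y)) / (s - t))
      (\<lambda>y. \<beta> y * signed_powr_deriv (p - 1) (z t y) * zt t y) (at t within {0..})"
    by (simp add: right_diff_distrib mult_ac)
  show ?thesis
  proof (rule solves_dirichlet_has_time_derivative[OF v _ _ vt _ lim x])
    show "continuous_on {0..1} (\<lambda>x. \<beta> x * signed_powr (p - 1) (z s x))" if "s \<in> {0..}" for s
      using \<beta> continuous_on_compose2[OF continuous_on_signed_powr[OF p1] zc] that
      by (intro continuous_intros) auto
    show "continuous_on {0..1} (\<lambda>x. \<beta> x * signed_powr_deriv (p - 1) (z t x) * zt t x)"
      unfolding mult.assoc by (rule continuous_on_mult[OF \<beta> dc])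
  qed (use t in auto)
qed

lemma strong_solution_dirichlet_estimates:
  assumes p: "p \<ge> 2" and \<beta>: "continuous_on {0..1} \<beta>" "\<forall>x\<in>{0..1}. 0 \<le> \<beta> x \<and> \<beta> x \<le> 1"
    and sol: "strong_solution p a z0 z1 z zx zxx zt ztx ztt" and t: "t \<ge> 0"
    and v_sgn: "\<forall>s\<ge>0. solves_dirichlet (\<lambda>x. \<beta> x * sgn (z s x) * \<bar>z s x\<bar> powr (p - 1)) (v s)"
  defines "K \<equiv> p * (p - 1) powr (p / (p - 1))"
  shows "integral {0..1} (\<lambda>x. \<bar>v t x\<bar> powr (p / (p - 1))) \<le> K * E_p p zx zt t \<and>
    (\<exists>vt. (\<forall>x\<in>{0..1}. ((\<lambda>s. v s x) has_real_derivative vt x) (at t within {0..})) \<and>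
      (\<forall>\<sigma>>0. integral {0..1} (\<lambda>x. \<bar>vt x\<bar> powr (p / (p - 1))) \<le>
         K * ((p - 2) * \<sigma> * E_p p zx zt t +
              \<sigma> powr (- (p - 2)) * integral {0..1} (\<lambda>x. \<beta> x * \<bar>zt t x\<bar> powr p))))"
proof -
  have v: "solves_dirichlet (\<lambda>x. \<beta> x * signed_powr (p - 1) (z s x)) (v s)" if "s \<ge> 0" for s
    using v_sgn that by (simp add: signed_powr_def mult.assoc)
  define E where "E = E_p p zx zt t"
  define S where "S = (p * E) powr (1 / p)"
  have p1: "p \<ge> 1" using p by simp
  have zc: "continuous_on {0..1} (z t)" and ztc: "continuous_on {0..1} (zt t)"
    using strong_solution_continuous_on[OF sol p1 t] by auto
  have zt: "in_Lp p (zt t)"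
    using sol t unfolding strong_solution_def in_W10p_def has_weak_deriv_Lp_def by blast
  have zS: "\<forall>x\<in>{0..1}. \<bar>z t x\<bar> \<le> S"
    unfolding S_def E_def using strong_solution_abs_le_energy[OF sol p1 t] by blast
  have E0: "E \<ge> 0" unfolding E_def using E_p_nonneg p by simp
  have SE: "S powr p \<le> p * E" using E0 p by (simp add: S_def powr_powr)
  have "p \<le> K" unfolding K_def using p by (simp add: ge_one_powr_ge_zero)
  then have v_bound: "integral {0..1} (\<lambda>x. \<bar>v t x\<bar> powr (p / (p - 1))) \<le> K * E"
    using solves_dirichlet_signed_powr_Lq_bound[OF p \<beta> zc zS v[OF t]] SE mult_right_mono[OF _ E0]
    by fastforce
  have "continuous_on {0..1} (\<lambda>x. \<beta> x * signed_powr_deriv (p - 1) (z t x) * zt t x)"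
    using \<beta>(1) ztc continuous_on_compose2[OF continuous_on_signed_powr_deriv[of "p - 1"] zc] p
    by (intro continuous_intros) auto
  then obtain vt where vt: "solves_dirichlet (\<lambda>x. \<beta> x * signed_powr_deriv (p - 1) (z t x) * zt t x) vt"
    using solves_dirichlet_exists by blast
  show ?thesis
    using v_bound strong_solution_source_time_derivative[OF p \<beta>(1) sol t v vt]
      solves_dirichlet_linearized_Lq_bound[OF p \<beta> zc zS SE zt ztc vt]
    unfolding E_def K_def by blast
qed

theorem mainTheorem11:
  fixes p :: real and \<beta> :: "real \<Rightarrow> real"
  assumes "p \<ge> 2"
    and "smooth_on_01 \<beta>"
    and "\<forall>x\<in>{0..1}. 0 \<le> \<beta> x \<and> \<beta> x \<le> 1"
  shows "\<exists>K>0. \<forall>a a0 c z0 z1 z zx zxx zt ztx ztt v.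
     H1' a a0 c \<and> (\<forall>x\<in>{0..1}. x < c \<longrightarrow> \<beta> x = 0) \<and>
     in_Yp p z0 z1 \<and> strong_solution p a z0 z1 z zx zxx zt ztx ztt \<and>
     (\<forall>t\<ge>0. solves_dirichlet (\<lambda>x. \<beta> x * sgn (z t x) * \<bar>z t x\<bar> powr (p - 1)) (v t))
     \<longrightarrow>
     (\<forall>t\<ge>0.
        integral {0..1} (\<lambda>x. \<bar>v t x\<bar> powr (p / (p - 1))) \<le> K * E_p p zx zt t \<and>
        (\<exists>vt. (\<forall>x\<in>{0..1}. ((\<lambda>s. v s x) has_real_derivative vt x) (at t within {0..})) \<and>
          (\<forall>\<sigma>>0. integral {0..1} (\<lambda>x. \<bar>vt x\<bar> powr (p / (p - 1))) \<le>
             K * ((p - 2) * \<sigma> * E_p p zx zt t +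
                  \<sigma> powr (- (p - 2)) * integral {0..1} (\<lambda>x. \<beta> x * \<bar>zt t x\<bar> powr p)))))"
proof -
  have "p * (p - 1) powr (p / (p - 1)) > 0" using assms(1) by simp
  then show ?thesis
    using strong_solution_dirichlet_estimates[OF assms(1) smooth_on_01_continuous_on[OF assms(2)] assms(3)]
    by (intro exI[of _ "p * (p - 1) powr (p / (p - 1))"] conjI[OF _ allI] allI impI) blast+
qed

end
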